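(* Let $f:[0,1]^n\to\mathbb{R}$ be a measurable, bounded, positive function, let $$F(x_1,\dots,x_n)=\int_0^{x_1}\cdots\int_0^{x_n}f(t_1,\dots,t_n)\,dt_1\cdots dt_n,$$ and assume $F(1,\dots,1)=1$. Then the projection onto $\mathbb{R}^{n-1}$ (onto the first $n-1$ coordinates) of the level set $\mathcal{D}=\{(x_1,\dots,x_n)\in[0,1]^n: F(x_1,\dots,x_n)=1/2\}$ is a Jordan measurable set of nonzero Lebesgue measure. *)

theory Defs
  imports "HOL-Analysis.Analysis"
begin

definition jordan_measurable :: "'a::euclidean_space set \<Rightarrow> bool" where
  "jordan_measurable S \<longleftrightarrow> bounded S \<and> negligible (frontier S)"

end

theory Submission
  imports Defs
begin

text \<open>The distribution function \<open>F\<close> of a positive bounded density is continuous, increasing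
  in every coordinate, and strictly increasing whenever the volume of the box \<open>[0, x]\<close> grows.
  By the intermediate value theorem in the last coordinate, the projection of the level set
  \<open>{F = c}\<close> is the superlevel set \<open>{G \<ge> c}\<close> of \<open>G y = F (y, 1)\<close> in the cube. This set is compact
  and contains a relatively open neighbourhood of the corner \<open>One\<close>, where \<open>G = 1 > c\<close>, so it
  has positive measure; its boundary lies in the boundary of the cube together with the level
  set \<open>{G = c}\<close>. Since \<open>G\<close> increases strictly along the diagonal direction, this level set
  meets each line parallel to the diagonal at most once, so its translates by
  \<open>(1 / (k + 1)) *\<^sub>R One\<close> are pairwise disjoint subsets of a bounded set, forcing it to be null.\<close>

lemma One_prod: "(One :: 'a::euclidean_space \<times> 'b::euclidean_space) = (One, One)"
  using sum_Basis_prod_eq[of "\<lambda>x::'a \<times> 'b. x"]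
  by (simp add: prod_eq_iff fst_sum snd_sum)

lemma measure_Icc_0:
  fixes x :: "'a::ordered_euclidean_space"
  assumes "0 \<le> x"
  shows "measure lebesgue {0..x} = (\<Prod>i\<in>Basis. x \<bullet> i)"
  using assms by (simp add: cbox_interval[symmetric] content_cbox eucl_le[where 'a='a])

lemma measure_Icc_0_Pair:
  fixes y :: "'a::ordered_euclidean_space" and t :: real
  assumes "0 \<le> t"
  shows "measure lebesgue {0..(y, t)} = measure lebesgue {0..y} * t"
proof -
  have "{0..(y, t)} = cbox (0, 0) (y, t)"
    by (simp add: cbox_interval zero_prod_def)
  then have "measure lebesgue {0..(y, t)}
      = measure lebesgue (cbox 0 y) * measure lebesgue (cbox 0 t)"
    by (simp add: content_Pair)
  then show ?thesis
    using assms by (simp add: cbox_interval)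
qed

lemma measure_Icc_0_less_diagonal:
  fixes y :: "'a::ordered_euclidean_space"
  assumes "0 \<le> y" "0 < s"
  shows "measure lebesgue {0..y} < measure lebesgue {0..y + s *\<^sub>R One}"
proof -
  obtain i :: 'a where "i \<in> Basis" using nonempty_Basis by blast
  moreover have "0 \<le> y \<bullet> j" if "j \<in> Basis" for j
    using assms(1) that by (simp add: eucl_le[where 'a='a])
  ultimately have "(\<Prod>j\<in>Basis. y \<bullet> j) < (\<Prod>j\<in>Basis. (y + s *\<^sub>R One) \<bullet> j)"
    using assms(2)
    by (intro prod_mono_strict[of i]) (auto simp: inner_add_left intro: add_nonneg_pos)
  moreover have "0 \<le> y + s *\<^sub>R One"
    using assms by (intro add_nonneg_nonneg scaleR_nonneg_nonneg One_nonneg) auto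
  ultimately show ?thesis using assms(1) by (simp only: measure_Icc_0)
qed

lemma integral_pos_of_pos:
  fixes f :: "'a::euclidean_space \<Rightarrow> real"
  assumes f: "f absolutely_integrable_on S" and S: "S \<in> lmeasurable"
    and pos: "\<And>x. x \<in> S \<Longrightarrow> 0 < f x" and measure_pos: "0 < measure lebesgue S"
  shows "0 < integral S f"
proof -
  have S': "S \<in> sets lebesgue" using S by auto
  have int: "integrable (lebesgue_on S) f"
    using f S' unfolding set_integrable_def by (simp add: integrable_restrict_space)
  have eq: "integral\<^sup>L (lebesgue_on S) f = integral S f"
    by (rule lebesgue_integral_eq_integral[OF int S'])
  have "AE x in lebesgue_on S. 0 \<le> f x"
    using pos by (intro AE_I2) (auto simp: space_restrict_space less_imp_le)
  moreover have "\<not> (AE x in lebesgue_on S. f x = 0)"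
  proof
    assume "AE x in lebesgue_on S. f x = 0"
    moreover have "{x\<in>space (lebesgue_on S). f x \<noteq> 0} = S"
      using pos by (auto simp: space_restrict_space) (metis less_irrefl)
    ultimately have "emeasure (lebesgue_on S) S = 0"
      using AE_iff_measurable[of S "lebesgue_on S"] S' by (metis sets.top space_restrict_space2)
    then show False
      using S' measure_pos by (simp add: emeasure_restrict_space measure_def)
  qed
  ultimately have "integral\<^sup>L (lebesgue_on S) f \<noteq> 0"
    using integral_nonneg_eq_0_iff_AE[OF int] by auto
  moreover have "0 \<le> integral\<^sup>L (lebesgue_on S) f"
    using pos by (intro integral_nonneg_AE AE_I2) (auto simp: space_restrict_space less_imp_le)
  ultimately show ?thesis using eq by simp
qed

lemma measure_pos_of_interior_nonempty:
  fixes S :: "'a::euclidean_space set"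
  assumes "S \<in> lmeasurable" "interior S \<noteq> {}"
  shows "0 < measure lebesgue S"
proof (rule ccontr)
  assume "\<not> ?thesis"
  then have "negligible S"
    using assms(1) measure_nonneg[of lebesgue S] by (simp add: negligible_iff_measure0)
  then have "negligible (interior S)"
    using interior_subset negligible_subset by blast
  then show False
    using assms(2) open_not_negligible by blast
qed

lemma negligible_if_one_point_per_line:
  fixes L :: "'a::euclidean_space set"
  assumes "bounded L" "L \<in> sets lebesgue"
    and one_point: "\<And>y s. y \<in> L \<Longrightarrow> 0 < s \<Longrightarrow> y + s *\<^sub>R v \<notin> L"
  shows "negligible L"
proof -
  define A where "A k = (+) ((1 / Suc k) *\<^sub>R v) ` L" for k :: nat
  have L: "L \<in> lmeasurable"
    using assms(1,2) by (simp add: bounded_set_imp_lmeasurable)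
  obtain r where r: "\<And>y. y \<in> L \<Longrightarrow> norm y \<le> r"
    using assms(1) by (auto simp: bounded_iff)
  have translates_disjoint: "(+) (u *\<^sub>R v) ` L \<inter> (+) (w *\<^sub>R v) ` L = {}" if "u < w" for u w
  proof -
    have False if "y \<in> L" "z \<in> L" "u *\<^sub>R v + y = w *\<^sub>R v + z" for y z
    proof -
      have "y = z + (w - u) *\<^sub>R v" using that(3) by (simp add: algebra_simps)
      then show False using one_point[of z "w - u"] \<open>u < w\<close> that(1,2) by simp
    qed
    then show ?thesis by blast
  qed
  have disj: "disjoint_family A"
    unfolding disjoint_family_on_def
  proof (intro ballI impI)
    fix j k :: nat assume "j \<noteq> k"
    then have "1 / Suc j \<noteq> (1 / Suc k :: real)" by simp
    then consider "1 / Suc k < (1 / Suc j :: real)" | "1 / Suc j < (1 / Suc k :: real)"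
      by linarith
    then show "A j \<inter> A k = {}"
      unfolding A_def by cases (use translates_disjoint in blast)+
  qed
  have A_lmeasurable: "A k \<in> lmeasurable" for k
    unfolding A_def by (rule measurable_translation[OF L])
  have A_sub: "A k \<subseteq> cball 0 (r + norm v)" for k
  proof
    fix x assume "x \<in> A k"
    then obtain y where y: "y \<in> L" "x = (1 / Suc k) *\<^sub>R v + y" unfolding A_def by auto
    have "norm x \<le> norm v / Suc k + norm y"
      using y(2) norm_triangle_ineq[of "(1 / Suc k) *\<^sub>R v" y] by simp
    also have "\<dots> \<le> norm v / 1 + r"
      using r y(1) by (intro add_mono divide_left_mono) auto
    finally show "x \<in> cball 0 (r + norm v)" by simp
  qed
  have bound: "real N * measure lebesgue L \<le> measure lebesgue (cball (0::'a) (r + norm v))" for N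
  proof -
    have "real N * measure lebesgue L = (\<Sum>k<N. measure lebesgue (A k))"
      unfolding A_def by (simp add: measure_translation)
    also have "\<dots> = measure lebesgue (\<Union>k<N. A k)"
    proof (rule measure_finite_Union[symmetric])
      show "disjoint_family_on A {..<N}"
        using disj by (simp add: disjoint_family_on_def)
      show "emeasure lebesgue (A k) \<noteq> \<infinity>" for k
        using fmeasurableD2[OF A_lmeasurable] by (metis infinity_ennreal_def)
    qed (use A_lmeasurable in auto)
    also have "\<dots> \<le> measure lebesgue (cball (0::'a) (r + norm v))"
      using A_sub A_lmeasurable by (intro measure_mono_fmeasurable) auto
    finally show ?thesis .
  qed
  have "measure lebesgue L = 0"
  proof (rule ccontr)
    assume "measure lebesgue L \<noteq> 0"
    then have pos: "0 < measure lebesgue L" using measure_nonneg[of lebesgue L] by linarith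
    obtain N :: nat where "measure lebesgue (cball (0::'a) (r + norm v)) / measure lebesgue L < N"
      using reals_Archimedean2 by blast
    then show False using bound[of N] pos by (simp add: divide_less_eq)
  qed
  then show ?thesis using L by (simp add: negligible_iff_measure0)
qed

lemma closed_superlevel:
  fixes G :: "'a::topological_space \<Rightarrow> real"
  assumes "continuous_on K G" "closed K"
  shows "closed {y \<in> K. c \<le> G y}"
  using continuous_closed_preimage[OF assms, of "{c..}"] by (simp add: vimage_def Int_def)

lemma frontier_superlevel_subset:
  fixes G :: "'a::topological_space \<Rightarrow> real"
  assumes G: "continuous_on K G" and K: "closed K"
  shows "frontier {y \<in> K. c \<le> G y} \<subseteq> frontier K \<union> {y \<in> K. G y = c}"
proof
  fix y assume y: "y \<in> frontier {y \<in> K. c \<le> G y}"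
  have yK: "y \<in> K" and yc: "c \<le> G y"
    using y frontier_subset_closed[OF closed_superlevel[OF G K]] by blast+
  show "y \<in> frontier K \<union> {y \<in> K. G y = c}"
  proof (rule ccontr)
    assume "\<not> ?thesis"
    then have "y \<in> interior K" and "c < G y"
      using yK yc K by (auto simp: frontier_def)
    moreover have "open (interior K \<inter> G -` {c<..})"
      by (rule continuous_open_preimage) (auto intro: continuous_on_subset[OF G interior_subset])
    moreover have "interior K \<inter> G -` {c<..} \<subseteq> {y \<in> K. c \<le> G y}"
      using interior_subset by fastforce
    ultimately have "y \<in> interior {y \<in> K. c \<le> G y}"
      by (meson IntI greaterThan_iff interior_maximal interior_subset subsetD vimageI)
    then show False using y by (simp add: frontier_def)
  qed
qed

lemma interior_superlevel_nonempty:
  fixes G :: "'a::euclidean_space \<Rightarrow> real"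
  assumes G: "continuous_on (cbox a b) G" and "box a b \<noteq> {}"
    and x: "x \<in> cbox a b" "c < G x"
  shows "interior {y \<in> cbox a b. c \<le> G y} \<noteq> {}"
proof -
  obtain W where W: "open W" "cbox a b \<inter> G -` {c<..} = cbox a b \<inter> W"
    using continuous_openin_preimage_gen[OF G, of "{c<..}"] by (auto simp: openin_open)
  have "x \<in> closure (box a b)"
    using x \<open>box a b \<noteq> {}\<close> by simp
  moreover have "x \<in> W" using W x by auto
  ultimately obtain z where z: "z \<in> W \<inter> box a b"
    using open_Int_closure_eq_empty[OF W(1), of "box a b"] by blast
  have "W \<inter> box a b \<subseteq> cbox a b \<inter> G -` {c<..}"
    using W(2) box_subset_cbox by blast
  then have "W \<inter> box a b \<subseteq> {y \<in> cbox a b. c \<le> G y}"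
    by auto
  then have "W \<inter> box a b \<subseteq> interior {y \<in> cbox a b. c \<le> G y}"
    using W(1) by (intro interior_maximal open_Int open_box)
  then show ?thesis using z by blast
qed

locale bounded_density =
  fixes f :: "'a::ordered_euclidean_space \<Rightarrow> real" and B :: real
  assumes density_measurable: "f \<in> borel_measurable (lebesgue_on {0..One})"
    and density_pos: "\<And>x. x \<in> {0..One} \<Longrightarrow> 0 < f x"
    and density_le: "\<And>x. x \<in> {0..One} \<Longrightarrow> f x \<le> B"
begin

definition cdf :: "'a \<Rightarrow> real" where
  "cdf x = integral {0..x} f"

lemma absolutely_integrable_density:
  assumes "S \<subseteq> {0..One}" "S \<in> lmeasurable"
  shows "f absolutely_integrable_on S"
proof (rule measurable_bounded_by_integrable_imp_absolutely_integrable[where g="\<lambda>_. B"])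
  show "f \<in> borel_measurable (lebesgue_on S)"
    using density_measurable assms(1) measurable_restrict_mono by blast
  show "norm (f x) \<le> B" if "x \<in> S" for x
    using density_pos density_le assms(1) that by force
qed (use assms(2) integrable_on_const in auto)

lemma cdf_increment_bounds:
  assumes "0 \<le> x" "x \<le> y" "y \<le> One"
  shows cdf_mono: "cdf x \<le> cdf y"
    and cdf_increment_le: "cdf y - cdf x \<le> B * (measure lebesgue {0..y} - measure lebesgue {0..x})"
    and cdf_strict_mono: "measure lebesgue {0..x} < measure lebesgue {0..y} \<Longrightarrow> cdf x < cdf y"
proof -
  have sub: "{0..x} \<subseteq> {0..y}" "{0..y} \<subseteq> {0..One}"
    using assms by auto
  define D where "D = {0..y} - {0..x}"
  have D: "D \<in> lmeasurable" "D \<subseteq> {0..One}"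
    using sub by (auto simp: D_def cbox_interval[symmetric])
  have int_D: "f integrable_on D"
    using absolutely_integrable_density[OF D(2,1)] by (simp add: absolutely_integrable_on_def)
  have "(f has_integral (cdf x + integral D f)) ({0..x} \<union> D)"
    unfolding cdf_def
    by (intro has_integral_Un integrable_integral int_D negligible_empty)
       (use absolutely_integrable_density[of "{0..x}"] sub in
         \<open>auto simp: D_def absolutely_integrable_on_def cbox_interval[symmetric]\<close>)
  moreover have "{0..x} \<union> D = {0..y}" using sub by (auto simp: D_def)
  ultimately have increment: "cdf y - cdf x = integral D f"
    by (simp add: cdf_def integral_unique)
  have measure_D: "measure lebesgue D = measure lebesgue {0..y} - measure lebesgue {0..x}"
    unfolding D_def using sub by (intro measurable_measure_Diff) (auto simp: cbox_interval[symmetric])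
  have "integral D f \<le> integral D (\<lambda>_. B)"
    using D int_D density_le by (intro integral_le) (auto simp: integrable_on_const)
  also have "\<dots> = B * measure lebesgue D"
    using D(1) by (simp add: lmeasure_integral integral_mult_right[symmetric])
  finally show "cdf y - cdf x \<le> B * (measure lebesgue {0..y} - measure lebesgue {0..x})"
    using increment measure_D by simp
  have "0 \<le> integral D f"
    using int_D D(2) by (intro integral_nonneg) (auto intro!: less_imp_le density_pos)
  then show "cdf x \<le> cdf y" using increment by simp
  show "cdf x < cdf y" if "measure lebesgue {0..x} < measure lebesgue {0..y}"
  proof -
    have "0 < measure lebesgue D" using measure_D that by linarith
    then have "0 < integral D f"
      using D by (intro integral_pos_of_pos absolutely_integrable_density) (auto intro!: density_pos)
    then show ?thesis using increment by simp
  qed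
qed

lemma continuous_on_cdf: "continuous_on {0..One} cdf"
  unfolding continuous_on_def
proof (intro ballI)
  fix x :: 'a assume x: "x \<in> {0..One}"
  \<comment> \<open>both \<open>cdf x\<close> and \<open>cdf z\<close> lie between \<open>cdf (inf x z)\<close> and \<open>cdf (sup x z)\<close>\<close>
  define g where
    "g z = B * ((\<Prod>i\<in>Basis. sup x z \<bullet> i) - (\<Prod>i\<in>Basis. inf x z \<bullet> i))" for z
  have "(g \<longlongrightarrow> B * ((\<Prod>i\<in>Basis. sup x x \<bullet> i) - (\<Prod>i\<in>Basis. inf x x \<bullet> i)))
      (at x within {0..One})"
    unfolding g_def by (intro tendsto_intros)
  then have g_tendsto_0: "(g \<longlongrightarrow> 0) (at x within {0..One})" by simp
  have "norm (cdf z - cdf x) \<le> g z" if z: "z \<in> {0..One}" for z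
  proof -
    have "0 \<le> inf x z" "sup x z \<le> One" "inf x z \<le> sup x z"
      using x z by (auto intro: order_trans[OF inf_le1 sup_ge1])
    then have "cdf (sup x z) - cdf (inf x z)
        \<le> B * (measure lebesgue {0..sup x z} - measure lebesgue {0..inf x z})"
      by (intro cdf_increment_le)
    also have "\<dots> = g z"
      unfolding g_def using \<open>0 \<le> inf x z\<close> \<open>inf x z \<le> sup x z\<close>
      by (subst (1 2) measure_Icc_0) (auto intro: le_supI1)
    moreover have "cdf (inf x z) \<le> cdf x" "cdf x \<le> cdf (sup x z)"
      "cdf (inf x z) \<le> cdf z" "cdf z \<le> cdf (sup x z)"
      using x z \<open>0 \<le> inf x z\<close> \<open>sup x z \<le> One\<close> by (auto intro!: cdf_mono)
    ultimately show ?thesis by simp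
  qed
  then have "((\<lambda>z. cdf z - cdf x) \<longlongrightarrow> 0) (at x within {0..One})"
    by (intro Lim_null_comparison[OF _ g_tendsto_0]) (auto simp: eventually_at_filter)
  then show "(cdf \<longlongrightarrow> cdf x) (at x within {0..One})"
    by (rule LIM_zero_cancel)
qed

end

locale bounded_density_prod = bounded_density f B
  for f :: "'a::ordered_euclidean_space \<times> real \<Rightarrow> real" and B
begin

definition marginal_cdf :: "'a \<Rightarrow> real" where
  "marginal_cdf y = cdf (y, 1)"

lemma cdf_Pair_0 [simp]: "cdf (y, 0) = 0"
  unfolding cdf_def by (simp add: cbox_interval[symmetric] zero_prod_def content_Pair)

lemma marginal_cdf_One: "marginal_cdf One = cdf One"
  by (simp add: marginal_cdf_def One_prod)

lemma continuous_on_marginal_cdf: "continuous_on {0..One} marginal_cdf"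
  unfolding marginal_cdf_def
  by (rule continuous_on_compose2[OF continuous_on_cdf
        continuous_on_Pair[OF continuous_on_id continuous_on_const]])
     (auto simp: zero_prod_def One_prod)

lemma marginal_cdf_less_diagonal:
  assumes "y \<in> {0..One}" "y + s *\<^sub>R One \<in> {0..One}" "0 < s"
  shows "marginal_cdf y < marginal_cdf (y + s *\<^sub>R One)"
proof -
  have "0 \<le> s *\<^sub>R (One::'a)"
    using assms(3) by (intro scaleR_nonneg_nonneg One_nonneg) auto
  then have "0 \<le> (y, 1::real)" "(y, 1::real) \<le> (y + s *\<^sub>R One, 1)"
      "(y + s *\<^sub>R One, 1::real) \<le> One"
    using assms(1,2) by (auto simp: zero_prod_def One_prod)
  moreover have
    "measure lebesgue {0..(y, 1::real)} < measure lebesgue {0..(y + s *\<^sub>R One, 1::real)}"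
    using measure_Icc_0_less_diagonal[of y s] assms
    by (simp only: measure_Icc_0_Pair[OF zero_le_one] mult_1_right) simp
  ultimately show ?thesis
    unfolding marginal_cdf_def by (rule cdf_strict_mono)
qed

lemma fst_level_set_cdf:
  assumes "0 \<le> c"
  shows "fst ` {x \<in> {0..One}. cdf x = c} = {y \<in> {0..One}. c \<le> marginal_cdf y}"
proof (intro equalityI subsetI)
  fix y assume "y \<in> fst ` {x \<in> {0..One}. cdf x = c}"
  then obtain t where t: "y \<in> {0..One}" "t \<in> {0..1}" "cdf (y, t) = c"
    by (force simp: zero_prod_def One_prod)
  then have "cdf (y, t) \<le> marginal_cdf y"
    unfolding marginal_cdf_def by (intro cdf_mono) (auto simp: zero_prod_def One_prod)
  then show "y \<in> {y \<in> {0..One}. c \<le> marginal_cdf y}" using t by simp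
next
  fix y assume y: "y \<in> {y \<in> {0..One}. c \<le> marginal_cdf y}"
  have "continuous_on {0..1} (\<lambda>t. cdf (y, t))"
    by (rule continuous_on_compose2[OF continuous_on_cdf
          continuous_on_Pair[OF continuous_on_const continuous_on_id]])
       (use y in \<open>auto simp: zero_prod_def One_prod\<close>)
  then obtain t where t: "t \<in> {0..1}" "cdf (y, t) = c"
    using IVT'[of "\<lambda>t. cdf (y, t)" 0 c 1] y assms by (auto simp: marginal_cdf_def)
  moreover have "(y, t) \<in> {0..One}"
    using y t(1) by (simp add: zero_prod_def One_prod)
  ultimately show "y \<in> fst ` {x \<in> {0..One}. cdf x = c}"
    by (metis (mono_tags, lifting) fst_conv image_eqI mem_Collect_eq)
qed

lemma negligible_level_set_marginal_cdf: "negligible {y \<in> {0..One}. marginal_cdf y = c}"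
proof (rule negligible_if_one_point_per_line[where v = One])
  have "compact {y \<in> {0..One}. marginal_cdf y = c}"
    using continuous_closed_preimage_constant[OF continuous_on_marginal_cdf]
    by (intro compact_eq_bounded_closed[THEN iffD2] conjI
        bounded_subset[OF bounded_closed_interval]) auto
  then show "bounded {y \<in> {0..One}. marginal_cdf y = c}"
    and "{y \<in> {0..One}. marginal_cdf y = c} \<in> sets lebesgue"
    by (auto simp: compact_imp_bounded fmeasurableD[OF lmeasurable_compact])
  show "y + s *\<^sub>R One \<notin> {y \<in> {0..One}. marginal_cdf y = c}"
    if "y \<in> {y \<in> {0..One}. marginal_cdf y = c}" "0 < s" for y s
    using marginal_cdf_less_diagonal[of y s] that by auto
qed

lemma jordan_measurable_fst_level_set_cdf:
  assumes "0 \<le> c"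
  shows "jordan_measurable (fst ` {x \<in> {0..One}. cdf x = c})"
  unfolding fst_level_set_cdf[OF assms] jordan_measurable_def
proof
  show "bounded {y \<in> {0..One}. c \<le> marginal_cdf y}"
    by (rule bounded_subset[OF bounded_closed_interval]) auto
  have "frontier {y \<in> {0..One}. c \<le> marginal_cdf y}
      \<subseteq> frontier (cbox 0 One) \<union> {y \<in> {0..One}. marginal_cdf y = c}"
    using frontier_superlevel_subset[OF continuous_on_marginal_cdf] by (simp add: cbox_interval)
  then show "negligible (frontier {y \<in> {0..One}. c \<le> marginal_cdf y})"
    by (rule negligible_subset[rotated])
       (use negligible_level_set_marginal_cdf[of c] in
         \<open>simp add: frontier_cbox negligible_frontier_interval\<close>)
qed

lemma measure_fst_level_set_cdf_pos:
  assumes "0 \<le> c" "c < cdf One"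
  shows "0 < measure lebesgue (fst ` {x \<in> {0..One}. cdf x = c})"
  unfolding fst_level_set_cdf[OF assms(1)]
proof (rule measure_pos_of_interior_nonempty)
  show "{y \<in> {0..One}. c \<le> marginal_cdf y} \<in> lmeasurable"
    using closed_superlevel[OF continuous_on_marginal_cdf]
    by (intro lmeasurable_compact compact_eq_bounded_closed[THEN iffD2] conjI
        bounded_subset[OF bounded_closed_interval]) auto
  have "box 0 (One::'a) \<noteq> {}"
    by (simp add: box_ne_empty)
  then show "interior {y \<in> {0..One}. c \<le> marginal_cdf y} \<noteq> {}"
    using interior_superlevel_nonempty[of 0 One marginal_cdf One c] continuous_on_marginal_cdf
      assms(2) by (simp add: cbox_interval marginal_cdf_One One_nonneg)
qed

end

theorem theorem5p3:
  fixes f :: "(real ^ 'm) \<times> real \<Rightarrow> real"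
    and F :: "(real ^ 'm) \<times> real \<Rightarrow> real"
  assumes meas: "f \<in> borel_measurable (lebesgue_on (cbox 0 One))"
    and bdd: "\<exists>B. \<forall>x\<in>cbox 0 One. \<bar>f x\<bar> \<le> B"
    and pos: "\<forall>x\<in>cbox 0 One. f x > 0"
    and F_def: "\<forall>x\<in>cbox 0 One. F x = integral (cbox 0 x) f"
    and F_one: "F One = 1"
  shows "jordan_measurable (fst ` {x \<in> cbox 0 One. F x = 1/2})
       \<and> measure lebesgue (fst ` {x \<in> cbox 0 One. F x = 1/2}) > 0"
proof -
  obtain B where "\<forall>x\<in>cbox 0 One. \<bar>f x\<bar> \<le> B"
    using bdd by blast
  then have "\<And>x. x \<in> {0..One} \<Longrightarrow> f x \<le> B"
    by (simp add: cbox_interval abs_le_iff)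
  then interpret bounded_density_prod f B
    using meas pos by unfold_locales (simp_all add: cbox_interval)
  have level_set: "{x \<in> cbox 0 One. F x = 1/2} = {x \<in> {0..One}. cdf x = 1/2}"
    using F_def by (auto simp: cdf_def cbox_interval)
  have "cdf One = 1"
    using F_def F_one by (simp add: cdf_def cbox_interval One_nonneg)
  then show ?thesis
    unfolding level_set
    by (intro conjI jordan_measurable_fst_level_set_cdf measure_fst_level_set_cdf_pos) simp_all
qed

end
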